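(* In the four-price Devil's Menu described in the context (with $2\varepsilon<\delta\le V-\varepsilon$), let $$\bar B=\max_{S \subseteq \{1,\ldots,\bar{k}\},\ |S|=q} \left[ (V+\varepsilon) \sum_{k\in S} n^R_k+ \delta \sum_{k\in S} n^D_k + 2\varepsilon \sum_{k\notin S}n^D_k \right].$$ Starting from the profile in which every real voter applies for $s_1$ and every decoy voter applies for $s_2$, suppose exactly one decoy voter deviates and applies for $s_1$. Then, for every realization of the random selection, the adversary's total expenditure is at most $\bar B$.
   Context: There is a finite set $N$ of citizens partitioned into $\bar k>1$ districts $N_1,\dots,N_{\bar k}$; district $N_k$ contains $n_k^R\ge1$ real voters and $n_k^D$ decoy voters, $n_k=n_k^R+n_k^D>1$. Real voters value their ballot at $V>0$, decoy voters at $0$. Fix $1\le q\le\bar k-1$ and $\varepsilon>0$. Each citizen applies for slot $s_1$ or $s_2$. For district $k$ let $m_k$ be the number of $s_1$-applicants and $\rho_k=m_k/n_k^R$; let $\rho$ be the $q$-th smallest of $\rho_1,\dots,\rho_{\bar k}$, $C=\{k:\rho_k<\rho\}$, $T=\{k:\rho_k=\rho\}$, $c=|C|$, $t=|T|$. Districts in $C$ are selected and $q-c$ districts of $T$ are selected uniformly at random; the rest are non-selected. Prices offered: $s_1$ in a selected district $V+\varepsilon$; $s_2$ in a selected district $\delta$; $s_1$ in a non-selected district $\varepsilon$; $s_2$ in a non-selected district $2\varepsilon$. Each applicant sells his ballot iff the price strictly exceeds his valuation, and the adversary must pay the price for every ballot sold; the adversary's expenditure is the sum of these payments. *)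

theory Defs
  imports Complex_Main
begin

datatype slot = s1 | s2

text \<open>Citizens live in a finite set N; distr x is the district (in 1..kbar) of citizen x;
  rl x holds iff x is a real voter (otherwise a decoy); a x is the slot x applies for.\<close>

definition nR :: "'c set \<Rightarrow> ('c \<Rightarrow> nat) \<Rightarrow> ('c \<Rightarrow> bool) \<Rightarrow> nat \<Rightarrow> nat" where
  "nR N distr rl k = card {x \<in> N. distr x = k \<and> rl x}"

definition nD :: "'c set \<Rightarrow> ('c \<Rightarrow> nat) \<Rightarrow> ('c \<Rightarrow> bool) \<Rightarrow> nat \<Rightarrow> nat" where
  "nD N distr rl k = card {x \<in> N. distr x = k \<and> \<not> rl x}"

definition m_s1 :: "'c set \<Rightarrow> ('c \<Rightarrow> nat) \<Rightarrow> ('c \<Rightarrow> slot) \<Rightarrow> nat \<Rightarrow> nat" where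
  "m_s1 N distr a k = card {x \<in> N. distr x = k \<and> a x = s1}"

definition ratio :: "'c set \<Rightarrow> ('c \<Rightarrow> nat) \<Rightarrow> ('c \<Rightarrow> bool) \<Rightarrow> ('c \<Rightarrow> slot) \<Rightarrow> nat \<Rightarrow> real" where
  "ratio N distr rl a k = real (m_s1 N distr a k) / real (nR N distr rl k)"

definition qth_smallest :: "nat \<Rightarrow> nat \<Rightarrow> (nat \<Rightarrow> real) \<Rightarrow> real" where
  "qth_smallest kbar q f = sort (map f [1..<Suc kbar]) ! (q - 1)"

text \<open>All possible realizations of the set of selected districts: all of C plus q - c districts of T.\<close>
definition realizations :: "nat \<Rightarrow> nat \<Rightarrow> (nat \<Rightarrow> real) \<Rightarrow> nat set set" where
  "realizations kbar q f =
     (let r = qth_smallest kbar q f;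
          C = {k \<in> {1..kbar}. f k < r};
          T = {k \<in> {1..kbar}. f k = r}
      in {S. C \<subseteq> S \<and> S \<subseteq> C \<union> T \<and> card S = q})"

definition price :: "real \<Rightarrow> real \<Rightarrow> real \<Rightarrow> nat set \<Rightarrow> ('c \<Rightarrow> nat) \<Rightarrow> ('c \<Rightarrow> slot) \<Rightarrow> 'c \<Rightarrow> real" where
  "price V eps delta S distr a x =
     (if distr x \<in> S then (if a x = s1 then V + eps else delta)
      else (if a x = s1 then eps else 2 * eps))"

definition valuation :: "real \<Rightarrow> ('c \<Rightarrow> bool) \<Rightarrow> 'c \<Rightarrow> real" where
  "valuation V rl x = (if rl x then V else 0)"

definition expenditure :: "real \<Rightarrow> real \<Rightarrow> real \<Rightarrow> 'c set \<Rightarrow> ('c \<Rightarrow> nat) \<Rightarrow> ('c \<Rightarrow> bool)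
    \<Rightarrow> ('c \<Rightarrow> slot) \<Rightarrow> nat set \<Rightarrow> real" where
  "expenditure V eps delta N distr rl a S =
     (\<Sum>x\<in>N. if price V eps delta S distr a x > valuation V rl x
             then price V eps delta S distr a x else 0)"

definition Bbar :: "real \<Rightarrow> real \<Rightarrow> real \<Rightarrow> nat \<Rightarrow> nat \<Rightarrow> (nat \<Rightarrow> nat) \<Rightarrow> (nat \<Rightarrow> nat) \<Rightarrow> real" where
  "Bbar V eps delta kbar q nr nd =
     Max ((\<lambda>S. (V + eps) * (\<Sum>k\<in>S. real (nr k)) + delta * (\<Sum>k\<in>S. real (nd k))
               + 2 * eps * (\<Sum>k\<in>{1..kbar} - S. real (nd k)))
          ` {S. S \<subseteq> {1..kbar} \<and> card S = q})"

end

theory Submission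
  imports Defs
begin

text \<open>After the deviation every district has ratio 1 except the deviator's, whose ratio exceeds 1.
  Since q < kbar, the q-th smallest ratio is 1, so the deviator's district is never selected.
  Hence no decoy in a selected district applies for s1, and with these prices every citizen is
  paid at most V + eps (real, selected), delta (decoy, selected), 2 eps (decoy, not selected) or
  nothing (real, not selected): summed over districts this is the menu cost of the selected
  set, which is bounded by its maximum over all q-sets.\<close>

lemma qth_smallest_le:
  assumes "1 \<le> q" "q \<le> kbar" "card {k \<in> {1..kbar}. f k > c} \<le> kbar - q"
  shows "qth_smallest kbar q f \<le> c"
proof (rule ccontr)
  define xs where "xs = sort (map f [1..<Suc kbar])"
  assume "\<not> qth_smallest kbar q f \<le> c"
  then have "xs ! (q - 1) > c" by (simp add: qth_smallest_def xs_def)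
  moreover have "xs ! (q - 1) \<le> xs ! j" if "q - 1 \<le> j" "j < kbar" for j
    using that by (intro sorted_nth_mono) (auto simp: xs_def)
  ultimately have "{q - 1..<kbar} \<subseteq> {j. j < length xs \<and> c < xs ! j}"
    by (force simp: xs_def)
  then have "card {q - 1..<kbar} \<le> length (filter (\<lambda>x. x > c) xs)"
    unfolding length_filter_conv_card by (intro card_mono) auto
  then have "kbar - q + 1 \<le> length (filter (\<lambda>x. x > c) xs)"
    using assms(1,2) by simp
  also have "length (filter (\<lambda>x. x > c) xs) = length (filter (\<lambda>k. f k > c) [1..<Suc kbar])"
    unfolding xs_def filter_sort length_sort filter_map by (simp add: comp_def del: upt_Suc)
  also have "\<dots> = card {k \<in> {1..kbar}. f k > c}"
    by (subst distinct_card[symmetric]) (auto simp del: upt_Suc intro: arg_cong[where f = card])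
  finally show False using assms(3) by linarith
qed

lemma above_qth_smallest_not_selected:
  assumes "S \<in> realizations kbar q f" "f k > qth_smallest kbar q f"
  shows "k \<notin> S"
  using assms unfolding realizations_def Let_def by auto

lemma realization_subset:
  assumes "S \<in> realizations kbar q f"
  shows "S \<subseteq> {1..kbar}" "card S = q"
  using assms unfolding realizations_def Let_def by auto

lemma payment_le:
  assumes "eps > 0" "2 * eps < delta" "delta \<le> V - eps"
    and "\<not> rl x \<Longrightarrow> distr x \<in> S \<Longrightarrow> a x = s2"
  shows "(if price V eps delta S distr a x > valuation V rl x
          then price V eps delta S distr a x else 0)
         \<le> (if distr x \<in> S then (if rl x then V + eps else delta)
            else (if rl x then 0 else 2 * eps))"
  using assms by (auto simp: price_def valuation_def)

lemma sum_by_district_type: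
  fixes g :: "bool \<Rightarrow> bool \<Rightarrow> real"
  assumes "finite N" "\<forall>x\<in>N. distr x \<in> {1..kbar}"
  shows "(\<Sum>x\<in>N. g (distr x \<in> S) (rl x))
         = (\<Sum>k\<in>{1..kbar}. real (nR N distr rl k) * g (k \<in> S) True
                          + real (nD N distr rl k) * g (k \<in> S) False)"
proof -
  have "(\<Sum>x\<in>N. g (distr x \<in> S) (rl x))
        = (\<Sum>k\<in>{1..kbar}. \<Sum>x\<in>{x \<in> N. distr x = k}. g (distr x \<in> S) (rl x))"
    using assms by (intro sum.group[symmetric]) auto
  also have "\<dots> = (\<Sum>k\<in>{1..kbar}. real (nR N distr rl k) * g (k \<in> S) True
                                   + real (nD N distr rl k) * g (k \<in> S) False)"
  proof (rule sum.cong[OF refl])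
    fix k
    have "{x \<in> N. distr x = k} = {x \<in> N. distr x = k \<and> rl x} \<union> {x \<in> N. distr x = k \<and> \<not> rl x}"
      by auto
    then show "(\<Sum>x\<in>{x \<in> N. distr x = k}. g (distr x \<in> S) (rl x))
               = real (nR N distr rl k) * g (k \<in> S) True + real (nD N distr rl k) * g (k \<in> S) False"
      using assms(1) by (simp add: sum.union_disjoint disjoint_iff nR_def nD_def)
  qed
  finally show ?thesis .
qed

lemma expenditure_le_menu_cost:
  assumes "finite N" "\<forall>x\<in>N. distr x \<in> {1..kbar}" "S \<subseteq> {1..kbar}"
    and "eps > 0" "2 * eps < delta" "delta \<le> V - eps"
    and "\<forall>x\<in>N. \<not> rl x \<and> distr x \<in> S \<longrightarrow> a x = s2"
  shows "expenditure V eps delta N distr rl a S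
         \<le> (V + eps) * (\<Sum>k\<in>S. real (nR N distr rl k)) + delta * (\<Sum>k\<in>S. real (nD N distr rl k))
           + 2 * eps * (\<Sum>k\<in>{1..kbar} - S. real (nD N distr rl k))"
proof -
  define g where "g sel real_voter = (if sel then (if real_voter then V + eps else delta)
                                        else (if real_voter then 0 else 2 * eps))" for sel real_voter
  have "expenditure V eps delta N distr rl a S \<le> (\<Sum>x\<in>N. g (distr x \<in> S) (rl x))"
    unfolding expenditure_def g_def using assms(4-7) by (intro sum_mono payment_le) auto
  also have "\<dots> = (\<Sum>k\<in>{1..kbar}. real (nR N distr rl k) * g (k \<in> S) True
                                   + real (nD N distr rl k) * g (k \<in> S) False)"
    using assms(1,2) by (rule sum_by_district_type)
  also have "\<dots> = (\<Sum>k\<in>{1..kbar}. if k \<in> S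
                     then (V + eps) * real (nR N distr rl k) + delta * real (nD N distr rl k)
                     else 2 * eps * real (nD N distr rl k))"
    by (intro sum.cong) (auto simp: g_def)
  also have "\<dots> = (\<Sum>k\<in>S. (V + eps) * real (nR N distr rl k) + delta * real (nD N distr rl k))
                  + (\<Sum>k\<in>{1..kbar} - S. 2 * eps * real (nD N distr rl k))"
    using assms(3) by (simp add: sum.If_cases Int_absorb1 Diff_eq)
  finally show ?thesis by (simp add: sum.distrib sum_distrib_left)
qed

lemma menu_cost_le_Bbar:
  assumes "S \<subseteq> {1..kbar}" "card S = q"
  shows "(V + eps) * (\<Sum>k\<in>S. real (nr k)) + delta * (\<Sum>k\<in>S. real (nd k))
           + 2 * eps * (\<Sum>k\<in>{1..kbar} - S. real (nd k))
         \<le> Bbar V eps delta kbar q nr nd"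
  unfolding Bbar_def using assms by (intro Max_ge) auto

lemma m_s1_single_deviation:
  assumes "finite N" "d \<in> N" "\<not> rl d" "a = (\<lambda>x. if rl x \<or> x = d then s1 else s2)"
  shows "m_s1 N distr a k = nR N distr rl k + (if k = distr d then 1 else 0)"
proof -
  have "{x \<in> N. distr x = k \<and> a x = s1}
        = {x \<in> N. distr x = k \<and> rl x} \<union> (if k = distr d then {d} else {})"
    using assms(2,4) by auto
  then show ?thesis
    using assms(1,3) by (simp add: m_s1_def nR_def)
qed

lemma ratio_single_deviation:
  assumes "finite N" "d \<in> N" "\<not> rl d" "a = (\<lambda>x. if rl x \<or> x = d then s1 else s2)"
    and "nR N distr rl k \<ge> 1"
  shows "ratio N distr rl a k = (if k = distr d then 1 + 1 / real (nR N distr rl k) else 1)"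
  using assms by (simp add: ratio_def m_s1_single_deviation add_divide_distrib)

theorem corollary1:
  fixes N :: "'c set" and distr :: "'c \<Rightarrow> nat" and rl :: "'c \<Rightarrow> bool"
    and a :: "'c \<Rightarrow> slot" and d :: 'c
    and kbar q :: nat and V eps delta :: real and S :: "nat set"
  assumes "finite N"
    and "\<forall>x\<in>N. distr x \<in> {1..kbar}"
    and "kbar > 1"
    and "\<forall>k\<in>{1..kbar}. nR N distr rl k \<ge> 1"
    and "\<forall>k\<in>{1..kbar}. nR N distr rl k + nD N distr rl k > 1"
    and "1 \<le> q" and "q \<le> kbar - 1"
    and "V > 0" and "eps > 0"
    and "2 * eps < delta" and "delta \<le> V - eps"
    and "d \<in> N" and "\<not> rl d"
    and "a = (\<lambda>x. if rl x \<or> x = d then s1 else s2)"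
    and "S \<in> realizations kbar q (ratio N distr rl a)"
  shows "expenditure V eps delta N distr rl a S
           \<le> Bbar V eps delta kbar q (nR N distr rl) (nD N distr rl)"
proof -
  let ?f = "ratio N distr rl a"
  have ratio: "?f k = (if k = distr d then 1 + 1 / real (nR N distr rl k) else 1)"
    if "k \<in> {1..kbar}" for k
    using assms(1,4,12-14) that by (intro ratio_single_deviation) auto
  have "distr d \<in> {1..kbar}" using assms(2,12) by blast
  then have deviator_ratio: "?f (distr d) > 1"
    using assms(4) by (auto simp: ratio Suc_le_eq)
  have "{k \<in> {1..kbar}. ?f k > 1} \<subseteq> {distr d}" using ratio by (auto split: if_splits)
  then have "card {k \<in> {1..kbar}. ?f k > 1} \<le> card {distr d}"
    by (intro card_mono) auto
  then have "card {k \<in> {1..kbar}. ?f k > 1} \<le> kbar - q"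
    using assms(3,7) by simp
  then have "qth_smallest kbar q ?f \<le> 1"
    using assms(6,7) by (intro qth_smallest_le) auto
  then have "distr d \<notin> S"
    using assms(15) deviator_ratio by (intro above_qth_smallest_not_selected) auto
  then have "\<forall>x\<in>N. \<not> rl x \<and> distr x \<in> S \<longrightarrow> a x = s2"
    using assms(14) by auto
  with assms(1,2,9-11) realization_subset[OF assms(15)] show ?thesis
    by (intro order_trans[OF expenditure_le_menu_cost menu_cost_le_Bbar])
qed

end
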